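(* For every $M\geq 1$, $$g_1(M)=\sum_{k\geq 0}(k+1)\binom{M-k-1}{k+1},$$ where binomial coefficients $\binom{a}{b}$ with $b>a$ are zero.
   Context: The perimeter of a nonempty partition $\lambda$ with largest part $\lambda_1$ and $\ell(\lambda)$ parts is $\lambda_1+\ell(\lambda)-1$. $g_1(M)$ is the number of partitions with perimeter $M$ in which exactly one distinct even integer occurs as a part (possibly with multiplicity greater than one) and all other parts are odd. *)

theory Defs
  imports Main "HOL-Library.Multiset"
begin

definition is_partition :: "nat multiset \<Rightarrow> bool" where
  "is_partition p \<longleftrightarrow> (\<forall>x\<in>#p. 0 < x)"

definition perimeter :: "nat multiset \<Rightarrow> nat" where
  "perimeter p = Max (set_mset p) + size p - 1"

definition g1 :: "nat \<Rightarrow> nat" where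
  "g1 M = card {p. is_partition p \<and> p \<noteq> {#} \<and> perimeter p = M
                  \<and> card {x \<in> set_mset p. even x} = 1}"

end

theory Submission
  imports Defs
begin

text \<open>
  Sort the partitions by their largest part. If it is the even part \<open>2b\<close>, the other parts
  are odd numbers below \<open>2b\<close>, so the partition is a multiset of size \<open>M + 1 - 2b\<close> over
  \<open>b + 1\<close> values containing \<open>2b\<close>; there are \<open>C(M - b, b)\<close> of them. If it is odd, \<open>2a + 1\<close>,
  the even part \<open>2b\<close> can be any of \<open>a\<close> values, and the partition is a multiset of size
  \<open>M - 2a\<close> over \<open>a + 2\<close> values containing both \<open>2b\<close> and \<open>2a + 1\<close>; there are
  \<open>C(M - a - 1, a + 1)\<close> of them. With \<open>k = b - 1\<close> resp. \<open>k = a\<close>, the two cases contribute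
  \<open>C(M - k - 1, k + 1)\<close> and \<open>k C(M - k - 1, k + 1)\<close>.
\<close>

lemma mset_set_subseteq_mset:
  assumes "R \<subseteq> set_mset p"
  shows "mset_set R \<subseteq># p"
  using subset_imp_msubset_mset_set[OF assms] mset_set_set_mset_msubset
  by (rule subset_mset.order_trans) simp

lemma card_le_size_mset:
  assumes "R \<subseteq> set_mset p"
  shows "card R \<le> size p"
  using size_mset_mono[OF mset_set_subseteq_mset[OF assms]] by simp

lemma card_multisets_of_size_containing:
  assumes "finite V" "R \<subseteq> V"
  shows "card {p. set_mset p \<subseteq> V \<and> R \<subseteq> set_mset p \<and> size p = m}
           = (if card R \<le> m then (card V + (m - card R) - 1) choose (m - card R) else 0)"
    (is "card ?S = _")
proof (cases "card R \<le> m")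
  case True
  define n where "n = m - card R"
  have "finite R"
    using assms finite_subset by blast
  have "bij_betw (\<lambda>q. q + mset_set R) (multisets_of_size V n) ?S"
  proof (rule bij_betw_byWitness[where f' = "\<lambda>p. p - mset_set R"])
    show "\<forall>p\<in>?S. p - mset_set R + mset_set R = p"
      by (simp add: mset_set_subseteq_mset)
    show "(\<lambda>q. q + mset_set R) ` multisets_of_size V n \<subseteq> ?S"
      using \<open>finite R\<close> assms(2) True by (auto simp: multisets_of_size_def n_def)
    show "(\<lambda>p. p - mset_set R) ` ?S \<subseteq> multisets_of_size V n"
      using \<open>finite R\<close>
      by (auto simp: multisets_of_size_def n_def size_Diff_submset mset_set_subseteq_mset
               dest: in_diffD)
  qed simp
  then have "card ?S = card (multisets_of_size V n)"
    by (simp add: bij_betw_same_card)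
  with True show ?thesis
    by (simp add: card_multisets_of_size[OF assms(1)] n_def)
next
  case False
  with card_le_size_mset[of R] have "?S = {}"
    by auto
  with False show ?thesis
    by (simp only: card.empty if_False)
qed

definition odds_below :: "nat \<Rightarrow> nat set" where
  "odds_below n = {x. odd x \<and> x < n}"

lemma finite_odds_below [simp]: "finite (odds_below n)"
  unfolding odds_below_def by simp

lemma even_notin_odds_below [simp]: "even x \<Longrightarrow> x \<notin> odds_below n"
  unfolding odds_below_def by simp

lemma card_odds_below_double [simp]: "card (odds_below (2 * b)) = b"
proof -
  have "odds_below (2 * b) = (\<lambda>i. 2 * i + 1) ` {..<b}"
    unfolding odds_below_def by (auto elim!: oddE)
  then show ?thesis
    by (simp add: card_image inj_on_def)
qed

definition one_even_partitions :: "nat \<Rightarrow> nat multiset set" where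
  "one_even_partitions M = {p. is_partition p \<and> p \<noteq> {#} \<and> perimeter p = M
                               \<and> card {x \<in> set_mset p. even x} = 1}"

definition partitions_top_even :: "nat \<Rightarrow> nat \<Rightarrow> nat multiset set" where
  "partitions_top_even M b = {p. set_mset p \<subseteq> insert (2 * b) (odds_below (2 * b))
                                 \<and> 2 * b \<in># p \<and> 2 * b + size p = M + 1}"

definition partitions_top_odd :: "nat \<Rightarrow> nat \<Rightarrow> nat \<Rightarrow> nat multiset set" where
  "partitions_top_odd M a b = {p. set_mset p \<subseteq> insert (2 * b) (odds_below (2 * a + 2))
                                 \<and> 2 * b \<in># p \<and> 2 * a + 1 \<in># p \<and> 2 * a + 1 + size p = M + 1}"

lemma card_partitions_top_even: "card (partitions_top_even M b) = (M - b) choose b"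
proof -
  let ?V = "insert (2 * b) (odds_below (2 * b))"
  have "card (partitions_top_even M b)
          = card {p. set_mset p \<subseteq> ?V \<and> {2 * b} \<subseteq> set_mset p \<and> size p = M + 1 - 2 * b}"
    unfolding partitions_top_even_def
    by (rule arg_cong[where f = card]) (auto dest!: multi_member_split)
  also have "\<dots> = (if 1 \<le> M + 1 - 2 * b then (card ?V + (M - 2 * b) - 1) choose (M - 2 * b) else 0)"
    by (subst card_multisets_of_size_containing) auto
  also have "card ?V = b + 1"
    by simp
  also have "(if 1 \<le> M + 1 - 2 * b then (b + 1 + (M - 2 * b) - 1) choose (M - 2 * b) else 0)
               = (M - b) choose b"
    using binomial_symmetric[of b "M - b"] by (auto simp: mult_2)
  finally show ?thesis .
qed

lemma card_partitions_top_odd: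
  assumes "b \<le> a"
  shows "card (partitions_top_odd M a b) = (M - a - 1) choose (a + 1)"
proof -
  let ?V = "insert (2 * b) (odds_below (2 * a + 2))"
  have "2 * b \<noteq> 2 * a + 1"
    by presburger
  then have two: "card {2 * b, 2 * a + 1} = 2"
    by simp
  have "card (partitions_top_odd M a b)
          = card {p. set_mset p \<subseteq> ?V \<and> {2 * b, 2 * a + 1} \<subseteq> set_mset p \<and> size p = M - 2 * a}"
    unfolding partitions_top_odd_def using card_le_size_mset[of "{2 * b, 2 * a + 1}"] two
    by (intro arg_cong[where f = card] Collect_cong) force
  also have "\<dots> = (if 2 \<le> M - 2 * a then (card ?V + (M - 2 * a - 2) - 1) choose (M - 2 * a - 2)
                   else 0)"
    using assms by (subst card_multisets_of_size_containing) (auto simp: odds_below_def two)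
  also have "card ?V = a + 2"
    using card_odds_below_double[of "a + 1"] by (simp add: algebra_simps)
  also have "(if 2 \<le> M - 2 * a then (a + 2 + (M - 2 * a - 2) - 1) choose (M - 2 * a - 2) else 0)
               = (M - a - 1) choose (a + 1)"
  proof (cases "2 * a + 2 \<le> M")
    case True
    then have "a + 2 + (M - 2 * a - 2) - 1 = M - a - 1" "M - 2 * a - 2 = M - a - 1 - (a + 1)"
      by simp_all
    with True show ?thesis
      using binomial_symmetric[of "a + 1" "M - a - 1"] by simp
  qed auto
  finally show ?thesis .
qed

lemma partitions_top_even_shape:
  assumes "p \<in> partitions_top_even M b"
  shows "Max (set_mset p) = 2 * b" "{x \<in> set_mset p. even x} = {2 * b}"
proof -
  have sub: "set_mset p \<subseteq> insert (2 * b) (odds_below (2 * b))" and top: "2 * b \<in># p"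
    using assms by (auto simp: partitions_top_even_def)
  show "Max (set_mset p) = 2 * b"
    using sub top by (intro Max_eqI) (auto simp: odds_below_def)
  show "{x \<in> set_mset p. even x} = {2 * b}"
    using sub top by auto
qed

lemma partitions_top_odd_shape:
  assumes "p \<in> partitions_top_odd M a b" "b \<le> a"
  shows "Max (set_mset p) = 2 * a + 1" "{x \<in> set_mset p. even x} = {2 * b}"
proof -
  have sub: "set_mset p \<subseteq> insert (2 * b) (odds_below (2 * a + 2))"
    and even_part: "2 * b \<in># p" and top: "2 * a + 1 \<in># p"
    using assms(1) by (auto simp: partitions_top_odd_def)
  show "Max (set_mset p) = 2 * a + 1"
    using sub top assms(2) by (intro Max_eqI) (auto simp: odds_below_def)
  show "{x \<in> set_mset p. even x} = {2 * b}"
    using sub even_part by auto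
qed

lemma one_even_partitionsI:
  assumes "{x \<in> set_mset p. even x} = {e}" "0 < e" "Max (set_mset p) + size p = M + 1"
  shows "p \<in> one_even_partitions M"
proof -
  have "e \<in># p"
    using assms(1) by blast
  then have "p \<noteq> {#}"
    by auto
  moreover have "is_partition p"
    unfolding is_partition_def using assms(1,2) by (force intro: odd_pos)
  ultimately show ?thesis
    using assms by (simp add: one_even_partitions_def perimeter_def)
qed

lemma partitions_top_even_subset:
  assumes "1 \<le> b"
  shows "partitions_top_even M b \<subseteq> one_even_partitions M"
proof
  fix p
  assume "p \<in> partitions_top_even M b"
  with assms show "p \<in> one_even_partitions M"
    by (intro one_even_partitionsI[of p "2 * b"])
       (auto simp: partitions_top_even_shape partitions_top_even_def)
qed

lemma partitions_top_odd_subset: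
  assumes "1 \<le> b" "b \<le> a"
  shows "partitions_top_odd M a b \<subseteq> one_even_partitions M"
proof
  fix p
  assume "p \<in> partitions_top_odd M a b"
  with assms show "p \<in> one_even_partitions M"
    by (intro one_even_partitionsI[of p "2 * b"])
       (auto simp: partitions_top_odd_shape partitions_top_odd_def)
qed

lemma one_even_partitions_decomposition:
  "one_even_partitions M
     = (\<Union>b\<in>{1..M}. partitions_top_even M b)
       \<union> (\<Union>(a, b)\<in>(SIGMA a:{..<M}. {1..a}). partitions_top_odd M a b)"
  (is "_ = ?U")
proof
  show "?U \<subseteq> one_even_partitions M"
    using partitions_top_even_subset partitions_top_odd_subset by fastforce
next
  show "one_even_partitions M \<subseteq> ?U"
  proof
    fix p
    assume p: "p \<in> one_even_partitions M"
    then have "card {x \<in> set_mset p. even x} = 1"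
      by (simp add: one_even_partitions_def)
    then obtain e where evens: "{x \<in> set_mset p. even x} = {e}"
      by (rule card_1_singletonE)
    then obtain b where e: "e = 2 * b" "e \<in># p"
      by blast
    have "0 < e"
      using p e(2) by (auto simp: one_even_partitions_def is_partition_def)
    define L where "L = Max (set_mset p)"
    have "p \<noteq> {#}"
      using e(2) by auto
    then have L: "L \<in># p" "\<forall>x\<in>#p. x \<le> L" and size_pos: "0 < size p"
      unfolding L_def by (auto simp: nonempty_has_size)
    have "perimeter p = M"
      using p by (simp add: one_even_partitions_def)
    with size_pos have perimeter: "L + size p = M + 1"
      unfolding perimeter_def L_def by linarith
    have other_odd: "odd x" if "x \<in># p" "x \<noteq> 2 * b" for x
      using evens e that by blast
    show "p \<in> ?U"
    proof (cases "even L")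
      case True
      then have "L = 2 * b"
        using other_odd L(1) by blast
      then have "p \<in> partitions_top_even M b"
        using L(2) e perimeter other_odd
        by (fastforce simp: partitions_top_even_def odds_below_def le_neq_implies_less)
      moreover have "b \<in> {1..M}"
        using \<open>0 < e\<close> e(1) \<open>L = 2 * b\<close> perimeter size_pos by auto
      ultimately show ?thesis
        by blast
    next
      case False
      then obtain a where a: "L = 2 * a + 1"
        by (blast elim: oddE)
      have "p \<in> partitions_top_odd M a b"
        using L e perimeter other_odd a
        by (fastforce simp: partitions_top_odd_def odds_below_def)
      moreover have "(a, b) \<in> (SIGMA a:{..<M}. {1..a})"
        using L(2) e \<open>0 < e\<close> a perimeter size_pos by fastforce
      ultimately show ?thesis
        by blast
    qed
  qed
qed

lemma partitions_top_even_disjoint: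
  assumes "b \<noteq> b'"
  shows "partitions_top_even M b \<inter> partitions_top_even M b' = {}"
proof (rule equals0I)
  fix p
  assume "p \<in> partitions_top_even M b \<inter> partitions_top_even M b'"
  then have "{2 * b} = {2 * b'}"
    by (metis IntD1 IntD2 partitions_top_even_shape(2))
  with assms show False
    by simp
qed

lemma partitions_top_odd_disjoint:
  assumes "b \<le> a" "b' \<le> a'" "(a, b) \<noteq> (a', b')"
  shows "partitions_top_odd M a b \<inter> partitions_top_odd M a' b' = {}"
proof (rule equals0I)
  fix p
  assume p: "p \<in> partitions_top_odd M a b \<inter> partitions_top_odd M a' b'"
  have "2 * a + 1 = 2 * a' + 1" "{2 * b} = {2 * b'}"
    using partitions_top_odd_shape[of p M] p assms(1,2) by (metis IntD1 IntD2)+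
  with assms(3) show False
    by simp
qed

lemma partitions_top_even_top_odd_disjoint:
  assumes "b' \<le> a"
  shows "partitions_top_even M b \<inter> partitions_top_odd M a b' = {}"
proof (rule equals0I)
  fix p
  assume p: "p \<in> partitions_top_even M b \<inter> partitions_top_odd M a b'"
  have "2 * b = 2 * a + 1"
    using partitions_top_even_shape(1)[of p M b] partitions_top_odd_shape(1)[of p M a b'] p assms
    by simp
  then show False
    by presburger
qed

lemma finite_partitions_top_even: "finite (partitions_top_even M b)"
proof (rule finite_subset)
  show "partitions_top_even M b
          \<subseteq> multisets_of_size (insert (2 * b) (odds_below (2 * b))) (M + 1 - 2 * b)"
    unfolding partitions_top_even_def multisets_of_size_def by auto
qed auto

lemma finite_partitions_top_odd: "finite (partitions_top_odd M a b)"
proof (rule finite_subset)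
  show "partitions_top_odd M a b
          \<subseteq> multisets_of_size (insert (2 * b) (odds_below (2 * a + 2))) (M - 2 * a)"
    unfolding partitions_top_odd_def multisets_of_size_def by auto
qed auto

lemma card_one_even_partitions:
  "card (one_even_partitions M)
     = (\<Sum>b=1..M. card (partitions_top_even M b))
       + (\<Sum>a<M. \<Sum>b=1..a. card (partitions_top_odd M a b))"
proof -
  let ?I = "SIGMA a:{..<M}. {1..a}"
  have "(\<Union>b\<in>{1..M}. partitions_top_even M b) \<inter> (\<Union>(a, b)\<in>?I. partitions_top_odd M a b) = {}"
    using partitions_top_even_top_odd_disjoint by fastforce
  then have "card (one_even_partitions M)
          = card (\<Union>b\<in>{1..M}. partitions_top_even M b)
            + card (\<Union>(a, b)\<in>?I. partitions_top_odd M a b)"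
    unfolding one_even_partitions_decomposition
    by (intro card_Un_disjoint) (auto simp: finite_partitions_top_even finite_partitions_top_odd)
  also have "\<dots> = (\<Sum>b=1..M. card (partitions_top_even M b))
                   + (\<Sum>(a, b)\<in>?I. card (partitions_top_odd M a b))"
    using partitions_top_even_disjoint partitions_top_odd_disjoint
    by (simp add: card_UN_disjoint finite_partitions_top_even finite_partitions_top_odd
                  case_prod_unfold)
  finally show ?thesis
    by (simp add: sum.Sigma)
qed

theorem mainTheorem10:
  fixes M :: nat
  assumes "M \<ge> 1"
  shows "g1 M = (\<Sum>k<M. (k + 1) * ((M - k - 1) choose (k + 1)))"
proof -
  have "g1 M = card (one_even_partitions M)"
    by (simp add: g1_def one_even_partitions_def)
  also have "\<dots> = (\<Sum>b=1..M. (M - b) choose b) + (\<Sum>a<M. a * ((M - a - 1) choose (a + 1)))"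
    by (simp add: card_one_even_partitions card_partitions_top_even card_partitions_top_odd)
  also have "(\<Sum>b=1..M. (M - b) choose b) = (\<Sum>k<M. (M - k - 1) choose (k + 1))"
    using sum_bounds_lt_plus1[of "\<lambda>b. (M - b) choose b" M] by simp
  finally show ?thesis
    by (simp add: sum.distrib)
qed

end
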